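(* The reduction relation $\to_{{\tt j}/{\tt o}}$ on $\lambda j$-terms is strongly normalizing (terminating).
   Context: $\lambda j$-terms are generated by $t,u::= x\mid \lambda x.t\mid t\,u\mid t[x/u]$; $\lambda x.t$ and $t[x/u]$ bind $x$ in $t$ (not in $u$), and terms are considered modulo $\alpha$-conversion. $\mathrm{fv}(t)$ is the set of free variables, $t\{x/u\}$ is capture-avoiding meta-level substitution, and $|t|_x$ is the number of free occurrences of $x$ in $t$. If $|t|_x=n\ge2$, $t_{[y]_x}$ denotes any term obtained from $t$ by replacing $k$ of the free occurrences of $x$ by a fresh variable $y$, for some $1\le k\le n-1$. $\to_{\tt j}$ is the closure under all contexts of: $({\tt w})$ $t[x/u]\to t$ if $|t|_x=0$; $({\tt d})$ $t[x/u]\to t\{x/u\}$ if $|t|_x=1$; $({\tt c})$ $t[x/u]\to t_{[y]_x}[x/u][y/u]$ if $|t|_x\ge2$, $y$ fresh. $\equiv_{\tt o}$ is the smallest equivalence closed under contexts containing $t[x/s][y/v]\sim t[y/v][x/s]$ if $x\notin\mathrm{fv}(v)$ and $y\notin\mathrm{fv}(s)$; $\lambda y.(t[x/s])\sim(\lambda y.t)[x/s]$ if $y\notin\mathrm{fv}(s)$; and $t[x/s]\,v\sim(t\,v)[x/s]$ if $x\notin\mathrm{fv}(v)$. $t\to_{{\tt j}/{\tt o}}u$ iff $t\equiv_{\tt o}t'\to_{\tt j}u'\equiv_{\tt o}u$ for some $t',u'$. *)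

theory Defs
  imports Main
begin

text \<open>lambda-j terms in de Bruijn notation (terms modulo alpha-conversion).
  Sub t u represents t[x/u], where x is the bound index 0 of t.\<close>

datatype trm = Var nat | Lam trm | App trm trm | Sub trm trm

fun lift :: "nat \<Rightarrow> trm \<Rightarrow> trm" where
  "lift k (Var i) = (if i < k then Var i else Var (Suc i))"
| "lift k (Lam t) = Lam (lift (Suc k) t)"
| "lift k (App t u) = App (lift k t) (lift k u)"
| "lift k (Sub t u) = Sub (lift (Suc k) t) (lift k u)"

text \<open>Decrement indices > k (used when index k does not occur).\<close>
fun lower :: "nat \<Rightarrow> trm \<Rightarrow> trm" where
  "lower k (Var i) = (if i \<le> k then Var i else Var (i - 1))"
| "lower k (Lam t) = Lam (lower (Suc k) t)"
| "lower k (App t u) = App (lower k t) (lower k u)"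
| "lower k (Sub t u) = Sub (lower (Suc k) t) (lower k u)"

fun subst :: "nat \<Rightarrow> trm \<Rightarrow> trm \<Rightarrow> trm" where
  "subst k (Var i) u = (if i < k then Var i else if i = k then u else Var (i - 1))"
| "subst k (Lam t) u = Lam (subst (Suc k) t (lift 0 u))"
| "subst k (App t1 t2) u = App (subst k t1 u) (subst k t2 u)"
| "subst k (Sub t1 t2) u = Sub (subst (Suc k) t1 (lift 0 u)) (subst k t2 u)"

fun occ :: "nat \<Rightarrow> trm \<Rightarrow> nat" where
  "occ k (Var i) = (if i = k then 1 else 0)"
| "occ k (Lam t) = occ (Suc k) t"
| "occ k (App t u) = occ k t + occ k u"
| "occ k (Sub t u) = occ (Suc k) t + occ k u"

fun swap :: "nat \<Rightarrow> trm \<Rightarrow> trm" where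
  "swap k (Var i) = (if i = k then Var (Suc k) else if i = Suc k then Var k else Var i)"
| "swap k (Lam t) = Lam (swap (Suc k) t)"
| "swap k (App t u) = App (swap k t) (swap k u)"
| "swap k (Sub t u) = Sub (swap (Suc k) t) (swap k u)"

text \<open>rename d t s: s arises from t by replacing some occurrences of index d (x)
  by index d+1 (y), at binder depth d.\<close>
inductive rename :: "nat \<Rightarrow> trm \<Rightarrow> trm \<Rightarrow> bool" where
  keep: "rename d (Var i) (Var i)"
| change: "rename d (Var d) (Var (Suc d))"
| lam: "rename (Suc d) t s \<Longrightarrow> rename d (Lam t) (Lam s)"
| app: "rename d t1 s1 \<Longrightarrow> rename d t2 s2 \<Longrightarrow> rename d (App t1 t2) (App s1 s2)"
| sub: "rename (Suc d) t1 s1 \<Longrightarrow> rename d t2 s2 \<Longrightarrow> rename d (Sub t1 t2) (Sub s1 s2)"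

inductive jstep :: "trm \<Rightarrow> trm \<Rightarrow> bool" where
  w: "occ 0 t = 0 \<Longrightarrow> jstep (Sub t u) (subst 0 t u)"
| d: "occ 0 t = 1 \<Longrightarrow> jstep (Sub t u) (subst 0 t u)"
| c: "occ 0 t \<ge> 2 \<Longrightarrow> rename 0 (lift 1 t) s \<Longrightarrow> occ 0 s \<ge> 1 \<Longrightarrow> occ 1 s \<ge> 1
      \<Longrightarrow> jstep (Sub t u) (Sub (Sub s (lift 0 u)) u)"
| lam: "jstep t t' \<Longrightarrow> jstep (Lam t) (Lam t')"
| appL: "jstep t t' \<Longrightarrow> jstep (App t u) (App t' u)"
| appR: "jstep u u' \<Longrightarrow> jstep (App t u) (App t u')"
| subL: "jstep t t' \<Longrightarrow> jstep (Sub t u) (Sub t' u)"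
| subR: "jstep u u' \<Longrightarrow> jstep (Sub t u) (Sub t u')"

inductive oeq :: "trm \<Rightarrow> trm \<Rightarrow> bool" where
  comm: "occ 0 s = 0 \<Longrightarrow>
     oeq (Sub (Sub t s) v) (Sub (Sub (swap 0 t) (lift 0 v)) (lower 0 s))"
| lam_sub: "occ 0 s = 0 \<Longrightarrow> oeq (Lam (Sub t s)) (Sub (Lam (swap 0 t)) (lower 0 s))"
| app_sub: "oeq (App (Sub t s) v) (Sub (App t (lift 0 v)) s)"
| refl: "oeq t t"
| sym: "oeq t u \<Longrightarrow> oeq u t"
| trans: "oeq t u \<Longrightarrow> oeq u v \<Longrightarrow> oeq t v"
| lam: "oeq t t' \<Longrightarrow> oeq (Lam t) (Lam t')"
| appL: "oeq t t' \<Longrightarrow> oeq (App t u) (App t' u)"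
| appR: "oeq u u' \<Longrightarrow> oeq (App t u) (App t u')"
| subL: "oeq t t' \<Longrightarrow> oeq (Sub t u) (Sub t' u)"
| subR: "oeq u u' \<Longrightarrow> oeq (Sub t u) (Sub t u')"

definition jo :: "trm \<Rightarrow> trm \<Rightarrow> bool" where
  "jo t u \<longleftrightarrow> (\<exists>t' u'. oeq t t' \<and> jstep t' u' \<and> oeq u' u)"

end

theory Submission
  imports Defs
begin

(* Let wocc k t count the free occurrences of index k in t, where an occurrence
   inside the argument u of an explicit substitution t'[x/u] is counted as many
   times as u will eventually be copied, namely max (wocc x t') 1 times.  The
   weighted size wsize t is the size of t in which every substitution argument u
   of t'[x/u] is counted with weight (max (wocc x t') 1)^2.

   Then every j-step strictly decreases wsize
   without increasing any wocc (rules w and d via the substitution identity,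
   rule c because a^2 + b^2 < (a + b)^2 for a, b >= 1, and the context rules by
   monotonicity), while each o-axiom leaves all weights unchanged.  Hence every
   step of j/o decreases wsize, which is therefore a termination measure. *)

text \<open>Weighted number of free occurrences of index k: occurrences in a
  substitution argument are multiplied by the number of its future copies.\<close>
fun wocc :: "nat \<Rightarrow> trm \<Rightarrow> nat" where
  "wocc k (Var i) = (if i = k then 1 else 0)"
| "wocc k (Lam t) = wocc (Suc k) t"
| "wocc k (App t u) = wocc k t + wocc k u"
| "wocc k (Sub t u) = wocc (Suc k) t + max (wocc 0 t) 1 * wocc k u"

text \<open>Number of copies of the argument u that the substitution Sub t u will produce.\<close>
abbreviation copies :: "trm \<Rightarrow> nat" where
  "copies t \<equiv> max (wocc 0 t) 1"

fun wsize :: "trm \<Rightarrow> nat" where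
  "wsize (Var i) = 1"
| "wsize (Lam t) = wsize t"
| "wsize (App t u) = wsize t + wsize u"
| "wsize (Sub t u) = wsize t + (copies t)^2 * wsize u"

lemma wsize_pos: "wsize t \<ge> 1"
  by (induction t) auto

lemma occ_le_wocc: "occ k t \<le> wocc k t"
proof (induction t arbitrary: k)
  case (App t1 t2)
  then show ?case by (simp add: add_mono)
next
  case (Sub t1 t2)
  have "occ k t2 \<le> copies t1 * wocc k t2"
    using Sub.IH(2)[of k] by (metis le_trans max.cobounded2 mult_1 mult_le_mono1)
  then show ?case using Sub.IH(1)[of "Suc k"] by simp
qed auto

lemma wocc_eq_0: "occ k t = 0 \<Longrightarrow> wocc k t = 0"
  by (induction t arbitrary: k) auto

section \<open>Weights under the index operations\<close>

text \<open>Lifting, swapping and lowering only rename indices, so they permute the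
  weighted occurrence counts and leave the weighted size unchanged.\<close>

lemma wocc_lift:
  "wocc j (lift k t) = (if j < k then wocc j t else if j = k then 0 else wocc (j - 1) t)"
proof (induction t arbitrary: k j)
  case (Sub t1 t2)
  have "wocc 0 (lift (Suc k) t1) = wocc 0 t1" using Sub.IH(1)[where k="Suc k" and j=0] by simp
  then show ?case using Sub.IH(1)[where k="Suc k" and j="Suc j"] Sub.IH(2)[where k=k and j=j]
    by auto
qed auto

lemma wsize_lift: "wsize (lift k t) = wsize t"
  by (induction t arbitrary: k) (auto simp: wocc_lift)

lemma wocc_swap:
  "wocc j (swap k t) = wocc (if j = k then Suc k else if j = Suc k then k else j) t"
proof (induction t arbitrary: k j)
  case (Sub t1 t2)
  have "wocc 0 (swap (Suc k) t1) = wocc 0 t1" using Sub.IH(1)[where k="Suc k" and j=0] by simp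
  then show ?case using Sub.IH(1)[where k="Suc k" and j="Suc j"] Sub.IH(2)[where k=k and j=j]
    by auto
qed auto

lemma wsize_swap: "wsize (swap k t) = wsize t"
  by (induction t arbitrary: k) (auto simp: wocc_swap)

lemma wocc_lower:
  "occ k t = 0 \<Longrightarrow> wocc j (lower k t) = (if j < k then wocc j t else wocc (Suc j) t)"
proof (induction t arbitrary: k j)
  case (Var i)
  then show ?case by (cases "i < k") auto
next
  case (Sub t1 t2)
  have "wocc 0 (lower (Suc k) t1) = wocc 0 t1"
    using Sub.IH(1)[where k="Suc k" and j=0] Sub.prems by simp
  then show ?case
    using Sub.IH(1)[where k="Suc k" and j="Suc j"] Sub.IH(2)[where k=k and j=j] Sub.prems
    by auto
qed auto

lemma wsize_lower: "occ k t = 0 \<Longrightarrow> wsize (lower k t) = wsize t"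
  by (induction t arbitrary: k) (auto simp: wocc_lower)

section \<open>Weights under meta-level substitution\<close>

lemma wocc_subst:
  "wocc j (subst k t u) = (if j < k then wocc j t else wocc (Suc j) t) + wocc k t * wocc j u"
proof (induction t arbitrary: k j u)
  case (Lam t)
  then show ?case by (auto simp: wocc_lift)
next
  case (App t1 t2)
  then show ?case by (auto simp: algebra_simps)
next
  case (Sub t1 t2)
  have "wocc 0 (subst (Suc k) t1 (lift 0 u)) = wocc 0 t1"
    using Sub.IH(1)[where k="Suc k" and j=0 and u="lift 0 u"] by (simp add: wocc_lift)
  then show ?case
    using Sub.IH(1)[where k="Suc k" and j="Suc j" and u="lift 0 u"] Sub.IH(2)[where k=k and j=j]
    by (simp add: wocc_lift algebra_simps)
qed auto

lemma wsize_subst_absent: "occ k t = 0 \<Longrightarrow> wsize (subst k t u) = wsize t"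
proof (induction t arbitrary: k u)
  case (Sub t1 t2)
  then show ?case by (simp add: wocc_subst wocc_lift)
qed (auto simp: wsize_lift)

text \<open>Substituting into a linear position: with m = wocc k t, the size grows by
  m^2 copies of u and loses m^2 (the weight of the eliminated variable).\<close>
lemma wsize_subst_linear:
  "occ k t \<le> 1 \<Longrightarrow> wsize (subst k t u) + (wocc k t)^2 = wsize t + (wocc k t)^2 * wsize u"
proof (induction t arbitrary: k u)
  case (Var i)
  then show ?case by auto
next
  case (Lam t)
  then show ?case by (auto simp: wsize_lift)
next
  case (App t1 t2)
  then consider "occ k t1 = 0" | "occ k t2 = 0" by fastforce
  then show ?case
  proof cases
    case 1
    then show ?thesis
      using App.IH(2)[of k u] App.prems by (simp add: wocc_eq_0 wsize_subst_absent)
  next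
    case 2
    then show ?thesis
      using App.IH(1)[of k u] App.prems by (simp add: wocc_eq_0 wsize_subst_absent)
  qed
next
  case (Sub t1 t2)
  have copies_subst: "wocc 0 (subst (Suc k) t1 (lift 0 u)) = wocc 0 t1"
    by (simp add: wocc_subst wocc_lift)
  consider "occ (Suc k) t1 = 0" | "occ k t2 = 0" using Sub.prems by fastforce
  then show ?case
  proof cases
    case 1
    define c m where "c = copies t1" and "m = wocc k t2"
    have "wsize (subst k t2 u) + m^2 = wsize t2 + m^2 * wsize u"
      using Sub.IH(2)[of k u] Sub.prems by (simp add: m_def)
    then have "c^2 * (wsize (subst k t2 u) + m^2) = c^2 * (wsize t2 + m^2 * wsize u)"
      by simp
    then show ?thesis using 1
      by (simp add: copies_subst wocc_eq_0 wsize_subst_absent c_def m_def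
          power_mult_distrib algebra_simps)
  next
    case 2
    then show ?thesis
      using Sub.IH(1)[of "Suc k" "lift 0 u"] Sub.prems
      by (simp add: copies_subst wocc_eq_0 wsize_subst_absent wsize_lift algebra_simps)
  qed
qed

lemma rename_weights:
  "rename d t s \<Longrightarrow> wsize s = wsize t \<and> (\<forall>j. j \<noteq> d \<and> j \<noteq> Suc d \<longrightarrow> wocc j s = wocc j t)
     \<and> wocc d s + wocc (Suc d) s = wocc d t + wocc (Suc d) t"
proof (induction rule: rename.induct)
  case (sub d t1 s1 t2 s2)
  have same_copies: "wocc 0 s1 = wocc 0 t1" using sub.IH(1) by auto
  have "wocc d (Sub s1 s2) + wocc (Suc d) (Sub s1 s2)
      = (wocc (Suc d) s1 + wocc (Suc (Suc d)) s1) + copies t1 * (wocc d s2 + wocc (Suc d) s2)"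
    by (simp add: same_copies algebra_simps)
  also have "\<dots> = (wocc (Suc d) t1 + wocc (Suc (Suc d)) t1)
      + copies t1 * (wocc d t2 + wocc (Suc d) t2)"
    using sub.IH by simp
  also have "\<dots> = wocc d (Sub t1 t2) + wocc (Suc d) (Sub t1 t2)"
    by (simp add: algebra_simps)
  finally show ?case using sub.IH by (simp add: same_copies)
qed auto

section \<open>Every j-step decreases the weights\<close>

text \<open>The second part is what makes the relation closed under
  the substitution context, where wocc 0 t determines the weight of the argument.\<close>
definition lighter :: "trm \<Rightarrow> trm \<Rightarrow> bool" where
  "lighter t' t \<longleftrightarrow> wsize t' < wsize t \<and> (\<forall>j. wocc j t' \<le> wocc j t)"

lemma lighter_linear_subst:
  assumes "occ 0 t \<le> 1"
  shows "lighter (subst 0 t u) (Sub t u)"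
proof -
  have size_eq: "wsize (subst 0 t u) + (wocc 0 t)^2 = wsize t + (wocc 0 t)^2 * wsize u"
    using wsize_subst_linear[OF assms] .
  have "wsize (subst 0 t u) < wsize t + (copies t)^2 * wsize u"
  proof (cases "wocc 0 t = 0")
    case True
    then show ?thesis using size_eq wsize_pos[of u] by simp
  next
    case False
    then have copies: "copies t = wocc 0 t" and sq: "(wocc 0 t)^2 \<ge> 1" by simp_all
    have "wsize (subst 0 t u) < wsize t + (wocc 0 t)^2 * wsize u" using size_eq sq by linarith
    then show ?thesis by (simp only: copies)
  qed
  moreover have "wocc 0 t * wocc j u \<le> copies t * wocc j u" for j
    by (simp add: mult_le_mono1)
  ultimately show ?thesis by (simp add: lighter_def wocc_subst)
qed

text \<open>Rule c: splitting the a + b weighted occurrences of x into a of x and b of y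
  replaces the weight (a + b)^2 of u by a^2 + b^2.\<close>
lemma lighter_contraction:
  assumes ren: "rename 0 (lift 1 t) s" and "occ 0 s \<ge> 1" and "occ 1 s \<ge> 1"
  shows "lighter (Sub (Sub s (lift 0 u)) u) (Sub t u)"
proof -
  define a b where "a = wocc 0 s" and "b = wocc 1 s"
  have a1: "a \<ge> 1" and b1: "b \<ge> 1"
    using occ_le_wocc[of 0 s] occ_le_wocc[of 1 s] assms(2,3) by (auto simp: a_def b_def)
  have split: "wocc 0 t = a + b"
    using rename_weights[OF ren] by (simp add: wocc_lift a_def b_def)
  have size_s: "wsize s = wsize t"
    using rename_weights[OF ren] by (simp add: wsize_lift)
  have others: "wocc (Suc (Suc j)) s = wocc (Suc j) t" for j
    using rename_weights[OF ren] by (simp add: wocc_lift)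
  have "(a^2 + b^2) * wsize u < (a + b)^2 * wsize u"
    using a1 b1 wsize_pos[of u] by (simp add: power2_eq_square algebra_simps)
  then have "wsize (Sub (Sub s (lift 0 u)) u) < wsize (Sub t u)"
    using a1 b1 split size_s by (simp add: a_def b_def wocc_lift wsize_lift max_def algebra_simps)
  moreover have "wocc j (Sub (Sub s (lift 0 u)) u) = wocc j (Sub t u)" for j
    using a1 b1 split others by (simp add: a_def b_def wocc_lift max_def algebra_simps)
  ultimately show ?thesis by (simp add: lighter_def)
qed

lemma lighter_Lam: "lighter t' t \<Longrightarrow> lighter (Lam t') (Lam t)"
  by (simp add: lighter_def)

lemma lighter_App: "lighter t' t \<Longrightarrow> lighter (App t' u) (App t u)"
                   "lighter u' u \<Longrightarrow> lighter (App t u') (App t u)"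
  by (auto simp: lighter_def add_le_mono add_less_le_mono add_le_less_mono)

lemma lighter_SubL:
  assumes "lighter t' t"
  shows "lighter (Sub t' u) (Sub t u)"
proof -
  have "wocc 0 t' \<le> wocc 0 t" using assms by (simp add: lighter_def)
  then have copies_le: "copies t' \<le> copies t" by (rule max.mono) simp
  then have "(copies t')^2 * wsize u \<le> (copies t)^2 * wsize u"
    by (simp add: power_mono)
  moreover have "copies t' * wocc j u \<le> copies t * wocc j u" for j
    using copies_le by (rule mult_le_mono1)
  ultimately show ?thesis
    using assms unfolding lighter_def
    by (simp only: wsize.simps wocc.simps) (meson add_le_mono add_less_le_mono)
qed

lemma lighter_SubR:
  assumes "lighter u' u"
  shows "lighter (Sub t u') (Sub t u)"
proof -
  have "(copies t)^2 * wsize u' < (copies t)^2 * wsize u"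
    using assms by (simp add: lighter_def)
  then show ?thesis using assms by (simp add: lighter_def)
qed

lemma jstep_lighter: "jstep t t' \<Longrightarrow> lighter t' t"
proof (induction rule: jstep.induct)
  case (w t u)
  then show ?case by (simp add: lighter_linear_subst)
next
  case (d t u)
  then show ?case by (simp add: lighter_linear_subst)
next
  case (c t s u)
  then show ?case by (simp add: lighter_contraction)
qed (simp_all add: lighter_Lam lighter_App lighter_SubL lighter_SubR)

section \<open>The equivalence o preserves the weights\<close>

lemma oeq_weights: "oeq t u \<Longrightarrow> wsize t = wsize u \<and> (\<forall>j. wocc j t = wocc j u)"
proof (induction rule: oeq.induct)
  case (comm s t v)
  then have "wocc 0 s = 0" by (rule wocc_eq_0)
  then show ?case using comm
    by (simp add: wocc_swap wocc_lift wocc_lower wsize_swap wsize_lift wsize_lower algebra_simps)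
next
  case (lam_sub s t)
  then have "wocc 0 s = 0" by (rule wocc_eq_0)
  then show ?case using lam_sub
    by (simp add: wocc_swap wocc_lower wsize_swap wsize_lower algebra_simps)
next
  case (app_sub t s v)
  show ?case by (simp add: wocc_lift wsize_lift algebra_simps)
qed auto

theorem lemma26:
  shows "wf {(u, t). jo t u}"
proof (rule wf_subset[OF wf_measure[of wsize]])
  show "{(u, t). jo t u} \<subseteq> measure wsize"
  proof clarify
    fix t u
    assume "jo t u"
    then obtain t' u' where "oeq t t'" "jstep t' u'" "oeq u' u"
      unfolding jo_def by blast
    then have "wsize u = wsize u'" "wsize u' < wsize t'" "wsize t' = wsize t"
      using oeq_weights jstep_lighter unfolding lighter_def by metis+
    then show "(u, t) \<in> measure wsize" by simp
  qed
qed

end
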